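(* If $W=\langle w_1,\ldots,w_n\rangle$ is a weave, then the subtournaments $W-\{w_1,w_2\},\ W-\{w_2,w_3\},\ \ldots,\ W-\{w_{n-1},w_n\}$ are all isomorphic to each other. Furthermore, for any $i,j$ there is an isomorphism $\phi$ from $W-\{w_i,w_{i+1}\}$ to $W-\{w_j,w_{j+1}\}$ such that whenever $\phi(w_k)=w_\ell$, the integers $k$ and $\ell$ have the same parity.
   Context: A tournament is a finite, non-null, loopless directed graph in which for any two distinct vertices $u,v$ there is exactly one edge with both ends in $\{u,v\}$; write $u\to v$ for the edge from $u$ to $v$. $W-X$ denotes the subtournament induced on $V(W)\setminus X$. A weave $\langle w_1,\dots,w_n\rangle$ is a tournament on $w_1,\dots,w_n$ such that: $w_i\to w_j$ whenever $i<j$ and $i,j$ have opposite parity; either $w_i\to w_j$ for all $i<j$ both odd, or $w_j\to w_i$ for all $i<j$ both odd; and either $w_i\to w_j$ for all $i<j$ both even, or $w_j\to w_i$ for all $i<j$ both even. *)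

theory Defs
  imports Main
begin

text \<open>A tournament on a finite nonempty vertex set V with edge relation E
  (E u v means the edge u \<rightarrow> v). Only the restriction of E to V matters.\<close>
definition tournament :: "'a set \<Rightarrow> ('a \<Rightarrow> 'a \<Rightarrow> bool) \<Rightarrow> bool" where
  "tournament V E \<longleftrightarrow> finite V \<and> V \<noteq> {} \<and> (\<forall>u\<in>V. \<not> E u u) \<and>
     (\<forall>u\<in>V. \<forall>v\<in>V. u \<noteq> v \<longrightarrow> (E u v \<longleftrightarrow> \<not> E v u))"

definition tourn_iso :: "'a set \<Rightarrow> ('a \<Rightarrow> 'a \<Rightarrow> bool) \<Rightarrow> 'b set \<Rightarrow> ('b \<Rightarrow> 'b \<Rightarrow> bool)
    \<Rightarrow> ('a \<Rightarrow> 'b) \<Rightarrow> bool" where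
  "tourn_iso V E V' E' \<phi> \<longleftrightarrow> bij_betw \<phi> V V' \<and>
     (\<forall>u\<in>V. \<forall>v\<in>V. E u v \<longleftrightarrow> E' (\<phi> u) (\<phi> v))"

definition weave :: "nat \<Rightarrow> (nat \<Rightarrow> 'a) \<Rightarrow> ('a \<Rightarrow> 'a \<Rightarrow> bool) \<Rightarrow> bool" where
  "weave n w E \<longleftrightarrow> inj_on w {1..n} \<and> tournament (w ` {1..n}) E \<and>
     (\<forall>i\<in>{1..n}. \<forall>j\<in>{1..n}. i < j \<and> odd i \<noteq> odd j \<longrightarrow> E (w i) (w j)) \<and>
     ((\<forall>i\<in>{1..n}. \<forall>j\<in>{1..n}. i < j \<and> odd i \<and> odd j \<longrightarrow> E (w i) (w j)) \<or>
      (\<forall>i\<in>{1..n}. \<forall>j\<in>{1..n}. i < j \<and> odd i \<and> odd j \<longrightarrow> E (w j) (w i))) \<and>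
     ((\<forall>i\<in>{1..n}. \<forall>j\<in>{1..n}. i < j \<and> even i \<and> even j \<longrightarrow> E (w i) (w j)) \<or>
      (\<forall>i\<in>{1..n}. \<forall>j\<in>{1..n}. i < j \<and> even i \<and> even j \<longrightarrow> E (w j) (w i)))"

end

theory Submission
  imports Defs
begin

text \<open>In a weave the direction of the edge between \<open>w a\<close> and \<open>w b\<close>, \<open>a < b\<close>, depends only on the
  parities of \<open>a\<close> and \<open>b\<close>. Deleting a consecutive pair \<open>w i, w (i+1)\<close> and deleting another pair
  \<open>w j, w (j+1)\<close> leave index sets that correspond under the map shifting the indices between the
  two pairs by two; this map preserves order and parity, hence all edges.\<close>

lemma weave_edge_antisym:
  assumes "weave n w E" "a \<in> {1..n}" "b \<in> {1..n}" "a \<noteq> b"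
  shows "E (w a) (w b) \<longleftrightarrow> \<not> E (w b) (w a)"
proof -
  have "w a \<noteq> w b" using assms by (auto simp: weave_def inj_on_eq_iff)
  moreover have "tournament (w ` {1..n}) E" using assms(1) by (simp add: weave_def)
  ultimately show ?thesis using assms(2,3) unfolding tournament_def by blast
qed

lemma weave_edge_parity_forward:
  assumes W: "weave n w E"
    and ab: "a \<in> {1..n}" "b \<in> {1..n}" "a' \<in> {1..n}" "b' \<in> {1..n}" "a < b" "a' < b'"
    and par: "even a = even a'" "even b = even b'"
  shows "E (w a) (w b) = E (w a') (w b')"
proof -
  have flip: "E (w b) (w a) \<longleftrightarrow> \<not> E (w a) (w b)" "E (w b') (w a') \<longleftrightarrow> \<not> E (w a') (w b')"
    by (rule weave_edge_antisym[OF W]; use ab in auto)+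
  consider "odd a \<noteq> odd b" | "odd a" "odd b" "odd a'" "odd b'" | "even a" "even b" "even a'" "even b'"
    using par by blast
  then show ?thesis
  proof cases
    case 1
    have "\<forall>i\<in>{1..n}. \<forall>j\<in>{1..n}. i < j \<and> odd i \<noteq> odd j \<longrightarrow> E (w i) (w j)"
      using W by (simp add: weave_def)
    then have "E (w a) (w b)" "E (w a') (w b')" using ab par 1 by auto
    then show ?thesis by simp
  next
    case 2
    from W have "(\<forall>i\<in>{1..n}. \<forall>j\<in>{1..n}. i < j \<and> odd i \<and> odd j \<longrightarrow> E (w i) (w j)) \<or>
      (\<forall>i\<in>{1..n}. \<forall>j\<in>{1..n}. i < j \<and> odd i \<and> odd j \<longrightarrow> E (w j) (w i))"
      by (simp add: weave_def)
    then show ?thesis using flip ab 2 by blast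
  next
    case 3
    from W have "(\<forall>i\<in>{1..n}. \<forall>j\<in>{1..n}. i < j \<and> even i \<and> even j \<longrightarrow> E (w i) (w j)) \<or>
      (\<forall>i\<in>{1..n}. \<forall>j\<in>{1..n}. i < j \<and> even i \<and> even j \<longrightarrow> E (w j) (w i))"
      by (simp add: weave_def)
    then show ?thesis using flip ab 3 by blast
  qed
qed

lemma weave_edge_parity:
  assumes W: "weave n w E"
    and ab: "a \<in> {1..n}" "b \<in> {1..n}" "a' \<in> {1..n}" "b' \<in> {1..n}" "a \<noteq> b" "a' \<noteq> b'"
    and "a < b \<longleftrightarrow> a' < b'" "even a = even a'" "even b = even b'"
  shows "E (w a) (w b) = E (w a') (w b')"
proof (cases "a < b")
  case True
  then show ?thesis using weave_edge_parity_forward assms by blast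
next
  case False
  then have "b < a" "b' < a'" using assms by auto
  then have "E (w b) (w a) = E (w b') (w a')"
    using weave_edge_parity_forward assms by blast
  moreover have "E (w a) (w b) \<longleftrightarrow> \<not> E (w b) (w a)" "E (w a') (w b') \<longleftrightarrow> \<not> E (w b') (w a')"
    by (rule weave_edge_antisym[OF W]; use ab in auto)+
  ultimately show ?thesis by blast
qed

lemma weave_edge_iff_mono_parity:
  assumes W: "weave n w E" and S: "S \<subseteq> {1..n}" and f: "f ` S \<subseteq> {1..n}"
    and mono: "strict_mono_on S f" and par: "\<And>k. k \<in> S \<Longrightarrow> even (f k) = even k"
    and ab: "a \<in> S" "b \<in> S"
  shows "E (w a) (w b) \<longleftrightarrow> E (w (f a)) (w (f b))"
proof (cases "a = b")
  case True
  have "\<forall>x\<in>w ` {1..n}. \<not> E x x" using W by (simp add: weave_def tournament_def)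
  then show ?thesis using True ab S f by auto
next
  case False
  have "a < b \<Longrightarrow> f a < f b" "b < a \<Longrightarrow> f b < f a"
    using strict_mono_onD[OF mono] ab by blast+
  then have order: "a < b \<longleftrightarrow> f a < f b" "f a \<noteq> f b" using False by (cases "a < b"; force)+
  have "a \<in> {1..n}" "b \<in> {1..n}" "f a \<in> {1..n}" "f b \<in> {1..n}" using ab S f by auto
  from weave_edge_parity[OF W this False order(2,1)] show ?thesis using par ab by simp
qed

lemma tourn_iso_from_index_bij:
  assumes inj: "inj_on w A" and "S \<subseteq> A" "T \<subseteq> A" and f: "bij_betw f S T"
    and edges: "\<And>a b. a \<in> S \<Longrightarrow> b \<in> S \<Longrightarrow> E (w a) (w b) \<longleftrightarrow> E (w (f a)) (w (f b))"
  shows "tourn_iso (w ` S) E (w ` T) E (\<lambda>x. w (f (the_inv_into A w x)))"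
proof -
  have inv: "the_inv_into A w (w a) = a" if "a \<in> S" for a
    using that assms(2) inj by (auto intro: the_inv_into_f_f)
  have "bij_betw (w \<circ> f) S (w ` T)"
    using bij_betw_trans[OF f inj_on_imp_bij_betw] inj assms(3) inj_on_subset by blast
  then have "bij_betw (\<lambda>x. w (f (the_inv_into A w x))) (w ` S) (w ` T)"
    using inj assms(2) inv inj_on_subset
    by (auto simp: bij_betw_def inj_on_def image_image cong: image_cong)
  then show ?thesis unfolding tourn_iso_def using edges inv by auto
qed

text \<open>Closes the gap at \<open>{i, i+1}\<close> and opens one at \<open>{j, j+1}\<close>, moving the indices in between by two.\<close>
definition pair_shift :: "nat \<Rightarrow> nat \<Rightarrow> nat \<Rightarrow> nat" where
  "pair_shift i j k = (if k < min i j \<or> k > max i j + 1 then k else if i \<le> j then k - 2 else k + 2)"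

context
  fixes n i j :: nat
  assumes ij: "i \<in> {1..<n}" "j \<in> {1..<n}"
begin

lemma pair_shift_mem:
  "k \<in> {1..n} - {i, i+1} \<Longrightarrow> pair_shift i j k \<in> {1..n} - {j, j+1}"
  using ij unfolding pair_shift_def by auto

lemma pair_shift_inverse:
  "k \<in> {1..n} - {i, i+1} \<Longrightarrow> pair_shift j i (pair_shift i j k) = k"
  using ij unfolding pair_shift_def by auto

lemma pair_shift_even_iff:
  "k \<in> {1..n} - {i, i+1} \<Longrightarrow> even (pair_shift i j k) = even k"
  using ij unfolding pair_shift_def by auto

lemma strict_mono_on_pair_shift: "strict_mono_on ({1..n} - {i, i+1}) (pair_shift i j)"
  using ij unfolding strict_mono_on_def pair_shift_def by auto

end

lemma bij_betw_pair_shift: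
  assumes "i \<in> {1..<n}" "j \<in> {1..<n}"
  shows "bij_betw (pair_shift i j) ({1..n} - {i, i+1}) ({1..n} - {j, j+1})"
  by (rule bij_betw_byWitness[where f'="pair_shift j i"])
    (use pair_shift_mem[OF assms] pair_shift_mem[OF assms(2,1)]
      pair_shift_inverse[OF assms] pair_shift_inverse[OF assms(2,1)] in auto)

theorem corollary3p5:
  fixes n :: nat and w :: "nat \<Rightarrow> 'a" and E :: "'a \<Rightarrow> 'a \<Rightarrow> bool"
  assumes "weave n w E"
    and "i \<in> {1..<n}" and "j \<in> {1..<n}"
  shows "(\<exists>\<phi>. tourn_iso (w ` {1..n} - {w i, w (i+1)}) E (w ` {1..n} - {w j, w (j+1)}) E \<phi>)
    \<and> (\<exists>\<phi>. tourn_iso (w ` {1..n} - {w i, w (i+1)}) E (w ` {1..n} - {w j, w (j+1)}) E \<phi>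
         \<and> (\<forall>k\<in>{1..n}. \<forall>l\<in>{1..n}.
              w k \<in> w ` {1..n} - {w i, w (i+1)} \<and> \<phi> (w k) = w l \<longrightarrow> (even k \<longleftrightarrow> even l)))"
proof -
  let ?S = "{1..n} - {i, i+1}" and ?T = "{1..n} - {j, j+1}"
  define \<phi> where "\<phi> x = w (pair_shift i j (the_inv_into {1..n} w x))" for x
  have inj: "inj_on w {1..n}" using assms(1) by (simp add: weave_def)
  have image_diff: "w ` {1..n} - {w k, w (k+1)} = w ` ({1..n} - {k, k+1})" if "k \<in> {1..<n}" for k
    using inj that by (auto simp: inj_on_image_set_diff)
  have "tourn_iso (w ` ?S) E (w ` ?T) E \<phi>"
    unfolding \<phi>_def
  proof (rule tourn_iso_from_index_bij[OF inj _ _ bij_betw_pair_shift[OF assms(2,3)]])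
    show "E (w a) (w b) \<longleftrightarrow> E (w (pair_shift i j a)) (w (pair_shift i j b))" if "a \<in> ?S" "b \<in> ?S" for a b
      using weave_edge_iff_mono_parity[OF assms(1) _ _ strict_mono_on_pair_shift[OF assms(2,3)]]
        pair_shift_mem[OF assms(2,3)] pair_shift_even_iff[OF assms(2,3)] that by blast
  qed auto
  then have iso: "tourn_iso (w ` {1..n} - {w i, w (i+1)}) E (w ` {1..n} - {w j, w (j+1)}) E \<phi>"
    using image_diff assms(2,3) by simp
  have "even k \<longleftrightarrow> even l"
    if "k \<in> {1..n}" "l \<in> {1..n}" "w k \<in> w ` {1..n} - {w i, w (i+1)}" "\<phi> (w k) = w l" for k l
  proof -
    have k: "k \<in> ?S" using that(1,3) inj assms(2) by (auto simp: inj_on_eq_iff)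
    then have "pair_shift i j k = l"
      using that inj pair_shift_mem[OF assms(2,3)] by (auto simp: \<phi>_def the_inv_into_f_f inj_on_eq_iff)
    then show ?thesis using pair_shift_even_iff[OF assms(2,3) k] by simp
  qed
  then show ?thesis using iso by blast
qed

end
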